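(* Fix $k>0$ and let $g(x,y)=\frac{e^{ik|x-y|}}{4\pi|x-y|}$ for $x\neq y$ in $\mathbb{R}^3$. For a bounded domain $D\subset\mathbb{R}^3$ set $U_D(x)=\int_{D}g(x,y)\,dy$. Then there exist countably infinitely many pairwise distinct bounded, connected, smooth domains $D_1,D_2,\dots\subset\mathbb{R}^3$ such that for any $i,j$ one has $U_{D_i}(x)=U_{D_j}(x)$ for all $x$ with $|x|>R$, whenever $R>0$ is sufficiently large (depending on $i,j$). *)

theory Defs
  imports "HOL-Analysis.Analysis"
begin

fun Ck_on :: "nat \<Rightarrow> 'a::euclidean_space set \<Rightarrow> ('a \<Rightarrow> real) \<Rightarrow> bool" where
  "Ck_on 0 S f = continuous_on S f"
| "Ck_on (Suc n) S f =
     (\<exists>f'. (\<forall>x\<in>S. (f has_derivative f' x) (at x)) \<and> (\<forall>v. Ck_on n S (\<lambda>x. f' x v)))"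

definition smooth_on :: "'a::euclidean_space set \<Rightarrow> ('a \<Rightarrow> real) \<Rightarrow> bool" where
  "smooth_on S f \<longleftrightarrow> (\<forall>n. Ck_on n S f)"

definition smooth_bounded_domain :: "'a::euclidean_space set \<Rightarrow> bool" where
  "smooth_bounded_domain D \<longleftrightarrow>
     open D \<and> bounded D \<and> connected D \<and> D \<noteq> {} \<and>
     (\<forall>p\<in>frontier D. \<exists>V \<phi>. open V \<and> p \<in> V \<and> smooth_on V \<phi> \<and>
        (\<forall>x\<in>V. \<not> (\<phi> has_derivative (\<lambda>h. 0)) (at x)) \<and>
        D \<inter> V = {x\<in>V. \<phi> x < 0})"

definition helmholtz_green :: "real \<Rightarrow> real^3 \<Rightarrow> real^3 \<Rightarrow> complex" where
  "helmholtz_green k x y =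
     exp (\<i> * complex_of_real (k * dist x y)) / complex_of_real (4 * pi * dist x y)"

definition volume_potential :: "real \<Rightarrow> (real^3) set \<Rightarrow> real^3 \<Rightarrow> complex" where
  "volume_potential k D x = integral D (\<lambda>y. helmholtz_green k x y)"

end

theory Submission
  imports Defs
begin

text \<open>Outside a ball \<open>B(c, r)\<close> the potential equals that of a point source at \<open>c\<close> of strength
  \<open>4 \<pi> (sin (k r) - k r cos (k r)) / k\<^sup>3\<close>. This is computed in coordinates adapted to the
  exterior point \<open>x\<close>: with the axis through \<open>c\<close> and \<open>x\<close>, slice the ball into discs at height
  \<open>c'\<close> and parametrise each disc by angle and relative radius \<open>\<sigma>\<close>; the Jacobian is
  \<open>\<sigma> (r\<^sup>2 - c'\<^sup>2)\<close> and both the \<open>\<sigma>\<close>- and the \<open>c'\<close>-integral have elementary antiderivatives.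
  Choosing \<open>k r\<close> to be a positive root of \<open>tan t = t\<close> makes the strength vanish, so all translates
  of that ball have the same potential, namely zero, far away.\<close>

lemma has_vector_derivative_exp_i_mult:
  fixes k :: real
  assumes "(u has_real_derivative u') (at x within s)"
  shows "((\<lambda>t. exp (\<i> * complex_of_real (k * u t))) has_vector_derivative
           (u' *\<^sub>R (\<i> * complex_of_real k * exp (\<i> * complex_of_real (k * u x))))) (at x within s)"
proof -
  have "((\<lambda>z. exp (\<i> * (complex_of_real k * z))) has_field_derivative
           (\<i> * complex_of_real k * exp (\<i> * (complex_of_real k * complex_of_real (u x)))))
        (at (complex_of_real (u x)))"
    by (auto intro!: derivative_eq_intros simp: algebra_simps)
  then have "((\<lambda>t. exp (\<i> * complex_of_real (k * t))) has_vector_derivative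
           (\<i> * complex_of_real k * exp (\<i> * complex_of_real (k * u x)))) (at (u x) within u ` s)"
    using has_vector_derivative_real_field by (fastforce simp: of_real_mult)
  from vector_diff_chain_within[OF assms[unfolded has_real_derivative_iff_has_vector_derivative] this]
  show ?thesis by (simp add: o_def)
qed

lemma exp_i_real: "exp (\<i> * complex_of_real t) = complex_of_real (cos t) + \<i> * complex_of_real (sin t)"
  by (simp add: cis_conv_exp[symmetric] cis.code complex_eq_iff)

text \<open>The radial integral over one disc slice of the ball; \<open>exp (i k u) / (4 \<pi> i k)\<close> is an
  antiderivative, \<open>u\<close> being the distance to the exterior point.\<close>
lemma has_integral_disc_slice:
  fixes k a d :: real
  assumes k: "k \<noteq> 0" and a: "a \<ge> 0" and d: "d > 0"
  shows "((\<lambda>\<sigma>. complex_of_real (\<sigma> * a) * exp (\<i> * complex_of_real (k * sqrt (\<sigma>\<^sup>2 * a + d\<^sup>2))) /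
             complex_of_real (4 * pi * sqrt (\<sigma>\<^sup>2 * a + d\<^sup>2)))
         has_integral
           (exp (\<i> * complex_of_real (k * sqrt (a + d\<^sup>2))) - exp (\<i> * complex_of_real (k * d)))
             / (4 * pi * \<i> * complex_of_real k)) {0..1}"
proof -
  define u where "u \<sigma> = sqrt (\<sigma>\<^sup>2 * a + d\<^sup>2)" for \<sigma>
  have u_pos: "u \<sigma> > 0" for \<sigma> using a d by (simp add: u_def add_nonneg_pos)
  have u_deriv: "(u has_real_derivative (\<sigma> * a / u \<sigma>)) (at \<sigma> within {0..1})" for \<sigma>
  proof -
    have "\<sigma>\<^sup>2 * a + d\<^sup>2 > 0" using a d by (simp add: add_nonneg_pos)
    then show ?thesis unfolding u_def
      by (auto intro!: derivative_eq_intros simp: field_simps power2_eq_square)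
  qed
  define F where "F \<sigma> = exp (\<i> * complex_of_real (k * u \<sigma>)) / (4 * pi * \<i> * complex_of_real k)" for \<sigma>
  have "(F has_vector_derivative
       (complex_of_real (\<sigma> * a) * exp (\<i> * complex_of_real (k * u \<sigma>)) / complex_of_real (4 * pi * u \<sigma>)))
       (at \<sigma> within {0..1})" for \<sigma>
  proof -
    have "(F has_vector_derivative ((\<sigma> * a / u \<sigma>) *\<^sub>R (\<i> * complex_of_real k *
            exp (\<i> * complex_of_real (k * u \<sigma>)))) / (4 * pi * \<i> * complex_of_real k)) (at \<sigma> within {0..1})"
      unfolding F_def by (intro has_vector_derivative_divide has_vector_derivative_exp_i_mult u_deriv)
    moreover have "(\<sigma> * a / u \<sigma>) *\<^sub>R (\<i> * complex_of_real k * exp (\<i> * complex_of_real (k * u \<sigma>)))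
          / (4 * pi * \<i> * complex_of_real k)
        = complex_of_real (\<sigma> * a) * exp (\<i> * complex_of_real (k * u \<sigma>)) / complex_of_real (4 * pi * u \<sigma>)"
      using k u_pos[of \<sigma>] by (simp add: scaleR_conv_of_real field_simps)
    ultimately show ?thesis by simp
  qed
  from fundamental_theorem_of_calculus[OF _ this] have
    "((\<lambda>\<sigma>. complex_of_real (\<sigma> * a) * exp (\<i> * complex_of_real (k * u \<sigma>)) / complex_of_real (4 * pi * u \<sigma>))
        has_integral (F 1 - F 0)) {0..1}"
    by simp
  moreover have "u 1 = sqrt (a + d\<^sup>2)" "u 0 = d" using d by (simp_all add: u_def)
  ultimately show ?thesis by (simp add: u_def F_def diff_divide_distrib)
qed

text \<open>Summing the slices along the axis through the exterior point at distance \<open>L\<close>;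
  \<open>sqrt (r\<^sup>2 + L\<^sup>2 - 2 L c)\<close> is the distance from that point to the rim of the slice at height \<open>c\<close>.\<close>
lemma has_integral_slices:
  fixes k r L :: real
  assumes k: "k \<noteq> 0" and r: "0 < r" "r < L"
  shows "((\<lambda>c. exp (\<i> * complex_of_real (k * sqrt (r\<^sup>2 + L\<^sup>2 - 2 * L * c))) -
             exp (\<i> * complex_of_real (k * (L - c))))
         has_integral 2 * \<i> * exp (\<i> * complex_of_real (k * L)) *
             complex_of_real ((sin (k * r) - k * r * cos (k * r)) / (k\<^sup>2 * L))) {-r..r}"
proof -
  define w where "w c = sqrt (r\<^sup>2 + L\<^sup>2 - 2 * L * c)" for c
  have w_pos: "w c > 0" if "c \<in> {-r..r}" for c
  proof -
    have "r\<^sup>2 + L\<^sup>2 - 2 * L * c \<ge> (L - r)\<^sup>2" using that r by (simp add: power2_eq_square algebra_simps)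
    moreover have "(L - r)\<^sup>2 > 0" using r by simp
    ultimately have "r\<^sup>2 + L\<^sup>2 - 2 * L * c > 0" by linarith
    then show ?thesis unfolding w_def by simp
  qed
  have w_deriv: "(w has_real_derivative (- L / w c)) (at c within {-r..r})" if "c \<in> {-r..r}" for c
  proof -
    have "r\<^sup>2 + L\<^sup>2 - 2 * L * c > 0" using w_pos[OF that] unfolding w_def by simp
    then show ?thesis unfolding w_def
      by (auto intro!: derivative_eq_intros simp: field_simps power2_eq_square)
  qed
  define G where "G w = - (exp (\<i> * complex_of_real (k * w)) *
      (complex_of_real w / (\<i> * complex_of_real k) + 1 / complex_of_real (k\<^sup>2))) / complex_of_real L" for w
  define H where "H c = \<i> * exp (\<i> * complex_of_real (k * (L - c))) / complex_of_real k" for c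
  define F where "F c = G (w c) - H c" for c
  have "(F has_vector_derivative (exp (\<i> * complex_of_real (k * w c)) - exp (\<i> * complex_of_real (k * (L - c)))))
       (at c within {-r..r})" if c: "c \<in> {-r..r}" for c
  proof -
    have w_deriv': "((\<lambda>c. complex_of_real (w c)) has_vector_derivative complex_of_real (- L / w c))
        (at c within {-r..r})"
      by (intro has_vector_derivative_of_real w_deriv c)
    have "((\<lambda>c. L - c) has_real_derivative (-1)) (at c within {-r..r})"
      by (auto intro!: derivative_eq_intros)
    then have "(F has_vector_derivative
        (- ((exp (\<i> * complex_of_real (k * w c)) * (complex_of_real (- L / w c) / (\<i> * complex_of_real k) + 0)
            + ((- L / w c) *\<^sub>R (\<i> * complex_of_real k * exp (\<i> * complex_of_real (k * w c)))) *
              (complex_of_real (w c) / (\<i> * complex_of_real k) + 1 / complex_of_real (k\<^sup>2)))) / complex_of_real L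
         - \<i> * ((-1) *\<^sub>R (\<i> * complex_of_real k * exp (\<i> * complex_of_real (k * (L - c))))) / complex_of_real k))
        (at c within {-r..r})"
      unfolding F_def G_def H_def
      by (intro has_vector_derivative_diff has_vector_derivative_divide has_vector_derivative_minus
            has_vector_derivative_mult has_vector_derivative_add has_vector_derivative_const
            has_vector_derivative_exp_i_mult w_deriv c w_deriv' has_vector_derivative_mult_right)
    then show ?thesis
      using k r w_pos[OF c] by (simp add: scaleR_conv_of_real field_simps power2_eq_square)
  qed
  from fundamental_theorem_of_calculus[OF _ this]
  have "((\<lambda>c. exp (\<i> * complex_of_real (k * w c)) - exp (\<i> * complex_of_real (k * (L - c))))
       has_integral (F r - F (-r))) {-r..r}"
    using r by auto
  moreover have "w r = L - r" "w (-r) = L + r"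
  proof -
    have "r\<^sup>2 + L\<^sup>2 - 2 * L * r = (L - r)\<^sup>2" "r\<^sup>2 + L\<^sup>2 - 2 * L * - r = (L + r)\<^sup>2"
      by (simp_all add: power2_eq_square algebra_simps)
    then show "w r = L - r" "w (-r) = L + r" using r by (simp_all add: w_def)
  qed
  moreover have "F r - F (-r) = 2 * \<i> * exp (\<i> * complex_of_real (k * L)) *
             complex_of_real ((sin (k * r) - k * r * cos (k * r)) / (k\<^sup>2 * L))"
  proof -
    have div_i: "x / (\<i> * y) = - \<i> * x / y" for x y :: complex
      by (metis divide_divide_eq_left divide_i)
    have kL: "k * (L - r) = k*L - k*r" "k * (L - - r) = k*L + k*r" "k * (L + r) = k*L + k*r"
      by (simp_all add: algebra_simps)
    have "complex_of_real k \<noteq> 0" "complex_of_real L \<noteq> 0" using k r by auto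
    then show ?thesis
      unfolding F_def G_def H_def \<open>w r = L - r\<close> \<open>w (-r) = L + r\<close> kL
        exp_i_real cos_add sin_add cos_diff sin_diff
      by (simp add: div_i field_simps complex_eq_iff power2_eq_square)
  qed
  ultimately show ?thesis unfolding w_def by simp
qed

definition cart3_to_prod :: "real^3 \<Rightarrow> (real \<times> real) \<times> real" where
  "cart3_to_prod p = ((p$3, p$2), p$1)"

definition prod_to_cart3 :: "(real \<times> real) \<times> real \<Rightarrow> real^3" where
  "prod_to_cart3 z = snd z *\<^sub>R axis 1 1 + snd (fst z) *\<^sub>R axis 2 1 + fst (fst z) *\<^sub>R axis 3 1"

lemma prod_to_cart3_eq_vector: "prod_to_cart3 z = vector [snd z, snd (fst z), fst (fst z)]"
  by (simp add: prod_to_cart3_def vec_eq_iff forall_3 axis_def)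

lemma cart3_to_prod_inverse [simp]: "cart3_to_prod (prod_to_cart3 z) = z"
  by (simp add: cart3_to_prod_def prod_to_cart3_eq_vector)

lemma prod_to_cart3_inverse [simp]: "prod_to_cart3 (cart3_to_prod p) = p"
  by (simp add: cart3_to_prod_def prod_to_cart3_eq_vector vec_eq_iff forall_3)

lemma cart3_to_prod_cbox: "cart3_to_prod ` cbox u v = cbox (cart3_to_prod u) (cart3_to_prod v)"
proof
  show "cart3_to_prod ` cbox u v \<subseteq> cbox (cart3_to_prod u) (cart3_to_prod v)"
    by (auto simp: cart3_to_prod_def mem_box_cart cbox_Pair_iff)
  show "cbox (cart3_to_prod u) (cart3_to_prod v) \<subseteq> cart3_to_prod ` cbox u v"
  proof
    fix z assume z: "z \<in> cbox (cart3_to_prod u) (cart3_to_prod v)"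
    then have "prod_to_cart3 z \<in> cbox u v"
      by (cases z) (auto simp: cart3_to_prod_def prod_to_cart3_eq_vector mem_box_cart forall_3)
    then show "z \<in> cart3_to_prod ` cbox u v" by (metis cart3_to_prod_inverse image_eqI)
  qed
qed

lemma prod_to_cart3_cbox: "prod_to_cart3 ` cbox u v = cbox (prod_to_cart3 u) (prod_to_cart3 v)"
proof -
  have "prod_to_cart3 ` cbox u v = prod_to_cart3 ` cart3_to_prod ` cbox (prod_to_cart3 u) (prod_to_cart3 v)"
    by (simp add: cart3_to_prod_cbox)
  then show ?thesis by (simp add: image_image)
qed

lemma measure_cart3_to_prod_cbox:
  "measure lborel (cart3_to_prod ` cbox u v) = measure lborel (cbox u v)"
proof -
  have "cart3_to_prod ` cbox u v = cbox ((u$3,u$2),u$1) ((v$3,v$2),v$1)"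
    using cart3_to_prod_cbox[of u v] by (simp only: cart3_to_prod_def)
  then have "measure lborel (cart3_to_prod ` cbox u v)
      = measure lborel {u$3..v$3} * measure lborel {u$2..v$2} * measure lborel {u$1..v$1}"
    by (simp only: content_Pair box_real)
  also have "\<dots> = measure lborel (cbox u v)"
  proof (cases "\<forall>i. u$i \<le> v$i")
    case True
    then have "cbox u v \<noteq> {}" by (simp add: interval_ne_empty_cart)
    moreover have "prod f (UNIV::3 set) = f 1 * f 2 * f 3" for f :: "3 \<Rightarrow> real"
      unfolding UNIV_3 by simp
    ultimately show ?thesis using True by (simp add: content_cbox_cart forall_3)
  next
    case False
    then obtain i where i: "v$i < u$i" by (auto simp: not_le)
    then have "cbox u v = {}" by (auto simp: mem_box_cart) (meson order_trans not_le)
    moreover have "u$1 > v$1 \<or> u$2 > v$2 \<or> u$3 > v$3" using i exhaust_3[of i] by auto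
    ultimately show ?thesis by auto
  qed
  finally show ?thesis .
qed

lemma has_integral_cbox_cart3_iterated:
  fixes H :: "real^3 \<Rightarrow> complex" and a b :: "real^3"
  assumes cont: "continuous_on (cbox a b) H"
  shows "(H has_integral integral {a$3..b$3} (\<lambda>\<theta>. integral {a$2..b$2} (\<lambda>c. integral {a$1..b$1}
           (\<lambda>\<sigma>. H (vector [\<sigma>, c, \<theta>]))))) (cbox a b)"
proof -
  define Hp where "Hp z = H (prod_to_cart3 z)" for z
  define B where "B = cbox (a$3, a$2) (b$3, b$2)"
  have box_eq: "prod_to_cart3 ` cbox (cart3_to_prod a) (cart3_to_prod b) = cbox a b"
    by (simp add: prod_to_cart3_cbox)
  have box_prod: "cbox (cart3_to_prod a) (cart3_to_prod b) = B \<times> {a$1..b$1}"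
    by (simp add: B_def cart3_to_prod_def cbox_Pair_eq)
  have cont_Hp: "continuous_on (cbox (cart3_to_prod a) (cart3_to_prod b)) Hp"
    unfolding Hp_def
    by (rule continuous_on_compose2[OF cont]) (auto simp: box_eq[symmetric] prod_to_cart3_def intro!: continuous_intros)
  then have cont_Hp': "continuous_on (cbox ((a$3, a$2), a$1) ((b$3, b$2), b$1)) Hp"
    by (simp add: cart3_to_prod_def)
  have cont_inner: "continuous_on B (\<lambda>x. integral {a$1..b$1} (\<lambda>y. Hp (x, y)))"
    using integral_continuous_on_param[of B "a$1" "b$1" "\<lambda>x y. Hp (x,y)"] cont_Hp[unfolded box_prod]
    by (simp add: case_prod_unfold)
  have "integral (cbox (cart3_to_prod a) (cart3_to_prod b)) Hp
      = integral B (\<lambda>x. integral {a$1..b$1} (\<lambda>y. Hp (x, y)))"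
    using integral_prod_continuous[OF cont_Hp'] by (simp add: B_def cart3_to_prod_def)
  also have "\<dots> = integral {a$3..b$3} (\<lambda>\<theta>. integral {a$2..b$2} (\<lambda>c. integral {a$1..b$1} (\<lambda>y. Hp ((\<theta>, c), y))))"
    using integral_prod_continuous[OF cont_inner[unfolded B_def]] by (simp add: B_def)
  finally have Hp_int: "(Hp has_integral integral {a$3..b$3} (\<lambda>\<theta>. integral {a$2..b$2}
      (\<lambda>c. integral {a$1..b$1} (\<lambda>y. Hp ((\<theta>, c), y))))) (cbox (cart3_to_prod a) (cart3_to_prod b))"
    using cont_Hp integrable_continuous by (metis integrable_integral)
  have "((\<lambda>x. Hp (cart3_to_prod x)) has_integral (1 / 1) *\<^sub>R integral {a$3..b$3} (\<lambda>\<theta>. integral {a$2..b$2}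
      (\<lambda>c. integral {a$1..b$1} (\<lambda>y. Hp ((\<theta>, c), y))))) (prod_to_cart3 ` cbox (cart3_to_prod a) (cart3_to_prod b))"
  proof (rule has_integral_twiddle[OF _ prod_to_cart3_inverse cart3_to_prod_inverse _ _ _ _ Hp_int])
    show "continuous (at x) cart3_to_prod" for x unfolding cart3_to_prod_def by (intro continuous_intros)
    show "\<exists>w z. cart3_to_prod ` cbox u v = cbox w z" for u v using cart3_to_prod_cbox by blast
    show "\<exists>w z. prod_to_cart3 ` cbox u v = cbox w z" for u v using prod_to_cart3_cbox by blast
    show "measure lborel (cart3_to_prod ` cbox u v) = 1 * measure lborel (cbox u v)" for u v
      using measure_cart3_to_prod_cbox by simp
  qed simp
  then show ?thesis unfolding box_eq Hp_def prod_to_cart3_inverse by (simp add: prod_to_cart3_eq_vector)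
qed

definition slice_radius :: "real \<Rightarrow> real \<Rightarrow> real" where
  "slice_radius r t = sqrt (r\<^sup>2 - t\<^sup>2)"

text \<open>Coordinates on the ball \<open>ball 0 r\<close>: \<open>p$2\<close> is the height along the third axis, \<open>p$3\<close> the angle
  around it and \<open>p$1 \<in> (0,1)\<close> the distance to the axis as a fraction of the radius of the slice.\<close>
definition ball_chart :: "real \<Rightarrow> real^3 \<Rightarrow> real^3" where
  "ball_chart r p = (p$1 * slice_radius r (p$2) * cos (p$3)) *\<^sub>R axis 1 1
     + (p$1 * slice_radius r (p$2) * sin (p$3)) *\<^sub>R axis 2 1 + (p$2) *\<^sub>R axis 3 1"

definition ball_chart_deriv :: "real \<Rightarrow> real^3 \<Rightarrow> real^3 \<Rightarrow> real^3" where
  "ball_chart_deriv r p h =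
     (slice_radius r (p$2) * cos (p$3) * h$1 - p$1 * p$2 / slice_radius r (p$2) * cos (p$3) * h$2
       - p$1 * slice_radius r (p$2) * sin (p$3) * h$3) *\<^sub>R axis 1 1
     + (slice_radius r (p$2) * sin (p$3) * h$1 - p$1 * p$2 / slice_radius r (p$2) * sin (p$3) * h$2
       + p$1 * slice_radius r (p$2) * cos (p$3) * h$3) *\<^sub>R axis 2 1
     + (h$2) *\<^sub>R axis 3 1"

definition ball_chart_domain :: "real \<Rightarrow> (real^3) set" where
  "ball_chart_domain r = box (vector [0, -r, -pi]) (vector [1, r, pi])"

definition ball_chart_dist :: "real \<Rightarrow> real \<Rightarrow> real^3 \<Rightarrow> real" where
  "ball_chart_dist r L p = sqrt ((p$1)\<^sup>2 * (r\<^sup>2 - (p$2)\<^sup>2) + (L - p$2)\<^sup>2)"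

definition ball_chart_density :: "real \<Rightarrow> real \<Rightarrow> real \<Rightarrow> real^3 \<Rightarrow> complex" where
  "ball_chart_density k r L p = complex_of_real (p$1 * (r\<^sup>2 - (p$2)\<^sup>2)) *
      exp (\<i> * complex_of_real (k * ball_chart_dist r L p)) / complex_of_real (4 * pi * ball_chart_dist r L p)"

lemma slice_radius_sq: "\<bar>t\<bar> \<le> r \<Longrightarrow> (slice_radius r t)\<^sup>2 = r\<^sup>2 - t\<^sup>2"
  unfolding slice_radius_def by (simp add: abs_le_square_iff[symmetric])

lemma slice_radius_pos: "\<bar>t\<bar> < r \<Longrightarrow> slice_radius r t > 0"
proof -
  assume t: "\<bar>t\<bar> < r"
  have "\<bar>t\<bar>\<^sup>2 < r\<^sup>2" by (rule power_strict_mono) (use t in auto)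
  then show ?thesis unfolding slice_radius_def by simp
qed

lemma has_real_derivative_slice_radius:
  "\<bar>t\<bar> < r \<Longrightarrow> (slice_radius r has_real_derivative (- t / slice_radius r t)) (at t within S)"
proof -
  assume t: "\<bar>t\<bar> < r"
  have "r\<^sup>2 - t\<^sup>2 > 0" using slice_radius_pos[OF t] unfolding slice_radius_def by simp
  then show ?thesis unfolding slice_radius_def
    by (auto intro!: derivative_eq_intros simp: field_simps power2_eq_square)
qed

lemma ball_chart_nth [simp]:
  "ball_chart r p $ 1 = p$1 * slice_radius r (p$2) * cos (p$3)"
  "ball_chart r p $ 2 = p$1 * slice_radius r (p$2) * sin (p$3)"
  "ball_chart r p $ 3 = p$2"
  by (simp_all add: ball_chart_def axis_def)

lemma mem_ball_chart_domain:
  "p \<in> ball_chart_domain r \<longleftrightarrow> 0 < p$1 \<and> p$1 < 1 \<and> -r < p$2 \<and> p$2 < r \<and> -pi < p$3 \<and> p$3 < pi"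
  by (simp add: ball_chart_domain_def mem_box_cart forall_3)

lemma linear_ball_chart_deriv: "linear (ball_chart_deriv r p)"
  unfolding ball_chart_deriv_def
  by (rule linearI) (simp_all add: vec_eq_iff forall_3 axis_def algebra_simps add_divide_distrib)

lemma ball_chart_has_derivative:
  assumes "\<bar>p$2\<bar> < r"
  shows "(ball_chart r has_derivative ball_chart_deriv r p) (at p within S)"
proof -
  have nth: "((\<lambda>p::real^3. p$i) has_derivative (\<lambda>h. h$i)) (at p within S)" for i
    by (rule bounded_linear_imp_has_derivative) (rule bounded_linear_vec_nth)
  have d_slice: "((\<lambda>p::real^3. slice_radius r (p$2)) has_derivative (\<lambda>h. (- (p$2) / slice_radius r (p$2)) * h$2))
      (at p within S)"
    using has_derivative_compose[OF nth has_real_derivative_slice_radius[OF assms, unfolded has_field_derivative_def]]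
    by (simp add: o_def mult.commute)
  have d_cos: "((\<lambda>p::real^3. cos (p$3)) has_derivative (\<lambda>h. (- sin (p$3)) * h$3)) (at p within S)"
    using has_derivative_compose[OF nth DERIV_cos[unfolded has_field_derivative_def]]
    by (simp add: o_def mult.commute)
  have d_sin: "((\<lambda>p::real^3. sin (p$3)) has_derivative (\<lambda>h. cos (p$3) * h$3)) (at p within S)"
    using has_derivative_compose[OF nth DERIV_sin[unfolded has_field_derivative_def]]
    by (simp add: o_def mult.commute)
  have "(ball_chart r has_derivative (\<lambda>h.
      (p$1 * slice_radius r (p$2) * (- sin (p$3) * h$3) + (p$1 * (- p$2 / slice_radius r (p$2) * h$2)
         + h$1 * slice_radius r (p$2)) * cos (p$3)) *\<^sub>R axis 1 1
      + (p$1 * slice_radius r (p$2) * (cos (p$3) * h$3) + (p$1 * (- p$2 / slice_radius r (p$2) * h$2)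
         + h$1 * slice_radius r (p$2)) * sin (p$3)) *\<^sub>R axis 2 1
      + h$2 *\<^sub>R axis 3 1)) (at p within S)"
    unfolding ball_chart_def
    by (intro has_derivative_add has_derivative_scaleR_left has_derivative_mult nth d_slice d_cos d_sin)
  then show ?thesis
    by (rule has_derivative_eq_rhs) (simp add: ball_chart_deriv_def fun_eq_iff algebra_simps)
qed

lemma det_ball_chart_deriv:
  assumes "\<bar>p$2\<bar> \<le> r"
  shows "det (matrix (ball_chart_deriv r p)) = - (p$1 * (r\<^sup>2 - (p$2)\<^sup>2))"
proof -
  have "det (matrix (ball_chart_deriv r p)) = - (p$1 * (slice_radius r (p$2))\<^sup>2)"
    apply (simp only: det_3 matrix_def vec_lambda_beta ball_chart_deriv_def vector_add_component
        vector_scaleR_component vector_minus_component axis_def)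
    apply (simp add: algebra_simps power2_eq_square)
    using sin_cos_squared_add[of "p$3"] by algebra
  then show ?thesis using slice_radius_sq[OF assms] by simp
qed

lemma norm_axis_diff_ball_chart:
  assumes "\<bar>p$2\<bar> \<le> r"
  shows "norm (L *\<^sub>R axis 3 1 - ball_chart r p) = ball_chart_dist r L p"
proof -
  have "(\<Sum>i\<in>UNIV. (norm ((L *\<^sub>R axis 3 1 - ball_chart r p) $ i))\<^sup>2) =
        (p$1)\<^sup>2 * (slice_radius r (p$2))\<^sup>2 + (L - p$2)\<^sup>2"
    apply (simp only: sum_3 ball_chart_nth vector_scaleR_component vector_minus_component axis_def
        vec_lambda_beta real_norm_def power2_abs)
    apply (simp add: algebra_simps power2_eq_square)
    using sin_cos_squared_add[of "p$3"] by algebra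
  then show ?thesis using slice_radius_sq[OF assms]
    by (simp add: norm_vec_def L2_set_def ball_chart_dist_def)
qed

lemma inj_on_ball_chart: "inj_on (ball_chart r) (ball_chart_domain r)"
proof (rule inj_onI)
  fix p p' assume p: "p \<in> ball_chart_domain r" and p': "p' \<in> ball_chart_domain r"
    and eq: "ball_chart r p = ball_chart r p'"
  have height: "p$2 = p'$2" using arg_cong[OF eq, of "\<lambda>v. v$3"] by simp
  define q where "q = slice_radius r (p$2)"
  have q: "q > 0" unfolding q_def using p by (intro slice_radius_pos) (auto simp: mem_ball_chart_domain)
  have rc: "rcis (p$1 * q) (p$3) = rcis (p'$1 * q) (p'$3)"
    using arg_cong[OF eq, of "\<lambda>v. v$1"] arg_cong[OF eq, of "\<lambda>v. v$2"] height
    by (simp add: q_def complex_eq_iff)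
  have pos: "p$1 * q > 0" "p'$1 * q > 0" using p p' q by (auto simp: mem_ball_chart_domain)
  have "p$3 = p'$3"
    using Arg_rcis[of "p$3" "p$1 * q"] Arg_rcis[of "p'$3" "p'$1 * q"] rc pos p p'
    by (auto simp: mem_ball_chart_domain)
  moreover have "p$1 * q = p'$1 * q" using arg_cong[OF rc, of cmod] pos by simp
  ultimately show "p = p'" using height q by (simp add: vec_eq_iff forall_3)
qed

lemma power2_norm_cart3: "(norm (y::real^3))\<^sup>2 = (y$1)\<^sup>2 + (y$2)\<^sup>2 + (y$3)\<^sup>2"
  by (simp add: norm_vec_def L2_set_def sum_3)

lemma ball_chart_in_ball:
  assumes "p \<in> ball_chart_domain r"
  shows "ball_chart r p \<in> ball 0 r"
proof -
  have height: "\<bar>p$2\<bar> \<le> r" "\<bar>p$2\<bar> < r" using assms by (auto simp: mem_ball_chart_domain)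
  have "(norm (ball_chart r p))\<^sup>2 = (p$1)\<^sup>2 * (slice_radius r (p$2))\<^sup>2 + (p$2)\<^sup>2"
    apply (simp only: power2_norm_cart3 ball_chart_nth)
    apply (simp add: algebra_simps power2_eq_square)
    using sin_cos_squared_add[of "p$3"] by algebra
  also have "\<dots> = (p$1)\<^sup>2 * (r\<^sup>2 - (p$2)\<^sup>2) + (p$2)\<^sup>2" using slice_radius_sq[OF height(1)] by simp
  also have "\<dots> < r\<^sup>2"
  proof -
    have "r\<^sup>2 - (p$2)\<^sup>2 > 0"
      using slice_radius_pos[OF height(2)] slice_radius_sq[OF height(1)] by (metis zero_less_power2 less_irrefl)
    moreover have "(p$1)\<^sup>2 < 1"
      using assms by (simp add: mem_ball_chart_domain abs_square_less_1)
    ultimately have "(p$1)\<^sup>2 * (r\<^sup>2 - (p$2)\<^sup>2) < 1 * (r\<^sup>2 - (p$2)\<^sup>2)" by (intro mult_strict_right_mono)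
    then show ?thesis by simp
  qed
  finally have "norm (ball_chart r p) < r" by (rule power2_less_imp_less) (use height in auto)
  then show ?thesis by simp
qed

lemma mem_ball_chart_image:
  assumes r: "r > 0" and y: "y \<in> ball 0 r" and y2: "y$2 \<noteq> 0"
  shows "y \<in> ball_chart r ` ball_chart_domain r"
proof -
  define z where "z = Complex (y$1) (y$2)"
  define \<rho> where "\<rho> = cmod z"
  have rho: "\<rho> > 0" using y2 by (simp add: \<rho>_def z_def complex_eq_iff)
  have "(norm y)\<^sup>2 < r\<^sup>2" using y by (intro power_strict_mono) auto
  then have ny: "(y$1)\<^sup>2 + (y$2)\<^sup>2 + (y$3)\<^sup>2 < r\<^sup>2" by (simp add: power2_norm_cart3)
  then have "(y$3)\<^sup>2 < r\<^sup>2" using y2 by (smt (verit) zero_le_power2 zero_less_power2)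
  then have height: "\<bar>y$3\<bar> < r" using r by (simp add: power2_less_imp_less)
  define q where "q = slice_radius r (y$3)"
  have q: "q > 0" using slice_radius_pos[OF height] by (simp add: q_def)
  have "\<rho>\<^sup>2 < q\<^sup>2"
    using slice_radius_sq[of "y$3" r] height ny by (simp add: q_def \<rho>_def z_def cmod_def)
  then have rho_q: "\<rho> < q" by (rule power2_less_imp_less) (use q in auto)
  define \<theta> where "\<theta> = Arg z"
  have angle: "-pi < \<theta>" "\<theta> < pi"
    using mpi_less_Arg[of z] Arg_le_pi[of z] Arg_eq_pi[of z] y2 by (auto simp: \<theta>_def z_def order_less_le)
  define p :: "real^3" where "p = vector [\<rho> / q, y$3, \<theta>]"
  have "p \<in> ball_chart_domain r" using rho q rho_q angle height by (auto simp: mem_ball_chart_domain p_def)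
  moreover have "z = rcis \<rho> \<theta>" by (simp add: \<rho>_def \<theta>_def rcis_cmod_Arg)
  then have "y$1 = \<rho> * cos \<theta>" "y$2 = \<rho> * sin \<theta>"
    by (metis Re_rcis Im_rcis complex.sel z_def)+
  then have "ball_chart r p = y" using q by (simp add: vec_eq_iff forall_3 p_def q_def[symmetric])
  ultimately show ?thesis by blast
qed

lemma ball_chart_dist_pos:
  assumes "0 < r" "r < L" "\<bar>p$2\<bar> \<le> r"
  shows "ball_chart_dist r L p > 0"
proof -
  have "(p$2)\<^sup>2 \<le> r\<^sup>2" by (metis abs_le_square_iff abs_of_pos assms(1) assms(3))
  then have "(p$1)\<^sup>2 * (r\<^sup>2 - (p$2)\<^sup>2) \<ge> 0" by simp
  moreover have "(L - p$2)\<^sup>2 > 0" using assms by auto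
  ultimately show ?thesis unfolding ball_chart_dist_def by (simp add: add_nonneg_pos)
qed

lemma continuous_on_ball_chart_density:
  assumes "0 < r" "r < L"
  shows "continuous_on (cbox (vector [0, -r, -pi]) (vector [1, r, pi])) (ball_chart_density k r L)"
proof -
  have "\<bar>p$2\<bar> \<le> r" if "p \<in> cbox (vector [0, -r, -pi]) (vector [1, r, pi])" for p :: "real^3"
    using that by (auto simp: mem_box_cart abs_le_iff dest: spec[of _ 2])
  then show ?thesis unfolding ball_chart_density_def ball_chart_dist_def
    by (intro continuous_intros)
      (use ball_chart_dist_pos[OF assms] in \<open>force simp: ball_chart_dist_def\<close>)+
qed

lemma has_integral_ball_chart_density:
  fixes k r L :: real
  assumes k: "k > 0" and r: "0 < r" "r < L"
  shows "(ball_chart_density k r L has_integral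
     exp (\<i> * complex_of_real (k * L)) * complex_of_real ((sin (k * r) - k * r * cos (k * r)) / (k ^ 3 * L)))
     (ball_chart_domain r)"
proof -
  define a :: "real^3" where "a = vector [0, -r, -pi]"
  define b :: "real^3" where "b = vector [1, r, pi]"
  define K where "K = 2 * \<i> * exp (\<i> * complex_of_real (k * L)) *
      complex_of_real ((sin (k * r) - k * r * cos (k * r)) / (k\<^sup>2 * L)) / (4 * pi * \<i> * complex_of_real k)"
  have slice: "integral {0..1} (\<lambda>\<sigma>. ball_chart_density k r L (vector [\<sigma>, c, \<theta>])) =
     (exp (\<i> * complex_of_real (k * sqrt (r\<^sup>2 + L\<^sup>2 - 2 * L * c))) -
       exp (\<i> * complex_of_real (k * (L - c)))) / (4 * pi * \<i> * complex_of_real k)"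
    if "c \<in> {-r..r}" for c \<theta>
  proof -
    have "r\<^sup>2 - c\<^sup>2 \<ge> 0" using that by (simp add: abs_le_square_iff[symmetric] abs_le_iff)
    moreover have "L - c > 0" using that r by simp
    moreover have "r\<^sup>2 - c\<^sup>2 + (L - c)\<^sup>2 = r\<^sup>2 + L\<^sup>2 - 2 * L * c" by (simp add: power2_eq_square algebra_simps)
    ultimately show ?thesis
      using has_integral_disc_slice[of k "r\<^sup>2 - c\<^sup>2" "L - c"] k
      by (simp only:) (simp add: ball_chart_density_def ball_chart_dist_def integral_unique)
  qed
  have "integral {-r..r} (\<lambda>c. integral {0..1} (\<lambda>\<sigma>. ball_chart_density k r L (vector [\<sigma>, c, \<theta>]))) = K" for \<theta>
  proof -
    have "integral {-r..r} (\<lambda>c. integral {0..1} (\<lambda>\<sigma>. ball_chart_density k r L (vector [\<sigma>, c, \<theta>]))) =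
        integral {-r..r} (\<lambda>c. (exp (\<i> * complex_of_real (k * sqrt (r\<^sup>2 + L\<^sup>2 - 2 * L * c))) -
             exp (\<i> * complex_of_real (k * (L - c)))) / (4 * pi * \<i> * complex_of_real k))"
      by (rule integral_cong) (simp add: slice)
    also have "\<dots> = K"
      unfolding K_def using has_integral_slices[of k r L] k r
      by (intro integral_unique has_integral_divide) auto
    finally show ?thesis .
  qed
  then have "integral {a$3..b$3} (\<lambda>\<theta>. integral {a$2..b$2} (\<lambda>c. integral {a$1..b$1}
      (\<lambda>\<sigma>. ball_chart_density k r L (vector [\<sigma>, c, \<theta>])))) = of_real (2 * pi) * K"
    by (simp add: a_def b_def scaleR_conv_of_real)
  also have "\<dots> = exp (\<i> * complex_of_real (k * L)) *
      complex_of_real ((sin (k * r) - k * r * cos (k * r)) / (k ^ 3 * L))"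
    using k r by (simp add: K_def field_simps power2_eq_square power3_eq_cube)
  finally show ?thesis
    using has_integral_cbox_cart3_iterated[OF continuous_on_ball_chart_density[OF r, of k]]
    by (simp add: ball_chart_domain_def has_integral_open_interval a_def b_def)
qed

lemma has_integral_change_of_variables_complex:
  fixes f :: "real^'m::{finite,wellorder} \<Rightarrow> complex" and g :: "real^'m::_ \<Rightarrow> real^'m::_"
  assumes "S \<in> sets lebesgue"
    and "\<And>x. x \<in> S \<Longrightarrow> (g has_derivative g' x) (at x within S)"
    and "inj_on g S"
    and "(\<lambda>x. \<bar>det (matrix (g' x))\<bar> *\<^sub>R f (g x)) absolutely_integrable_on S"
    and "((\<lambda>x. \<bar>det (matrix (g' x))\<bar> *\<^sub>R f (g x)) has_integral b) S"
  shows "(f has_integral b) (g ` S)"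
proof -
  define to_vec :: "complex \<Rightarrow> real^2" where "to_vec z = Re z *\<^sub>R axis 1 1 + Im z *\<^sub>R axis 2 1" for z
  define of_vec :: "real^2 \<Rightarrow> complex" where "of_vec v = Complex (v$1) (v$2)" for v
  have lin_to_vec: "bounded_linear to_vec"
    unfolding to_vec_def by (intro bounded_linear_intros bounded_linear_Re bounded_linear_Im)
  have lin_of_vec: "bounded_linear of_vec"
    unfolding of_vec_def linear_conv_bounded_linear[symmetric]
    by (rule linearI) (simp_all add: complex_eq_iff)
  have of_to_vec: "of_vec (to_vec z) = z" for z by (simp add: to_vec_def of_vec_def axis_def complex_eq_iff)
  have to_vec_scaleR: "to_vec (c *\<^sub>R z) = c *\<^sub>R to_vec z" for c z by (simp add: to_vec_def algebra_simps)
  have "(\<lambda>x. \<bar>det (matrix (g' x))\<bar> *\<^sub>R to_vec (f (g x))) absolutely_integrable_on S \<and>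
      integral S (\<lambda>x. \<bar>det (matrix (g' x))\<bar> *\<^sub>R to_vec (f (g x))) = to_vec b"
    using absolutely_integrable_linear[OF assms(4) lin_to_vec]
      integral_linear[OF has_integral_integrable[OF assms(5)] lin_to_vec] assms(5)
    by (simp add: o_def to_vec_scaleR integral_unique)
  then have "(\<lambda>y. to_vec (f y)) absolutely_integrable_on g ` S \<and> integral (g ` S) (\<lambda>y. to_vec (f y)) = to_vec b"
    using has_absolute_integral_change_of_variables[OF assms(1-3)] by blast
  then have "((\<lambda>y. to_vec (f y)) has_integral to_vec b) (g ` S)"
    by (metis has_integral_integrable_integral set_lebesgue_integral_eq_integral(1))
  from has_integral_linear[OF this lin_of_vec] show ?thesis by (simp add: o_def of_to_vec)
qed

lemma rotated_ball_chart_image: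
  fixes c :: "real^3"
  assumes Q: "orthogonal_transformation Q" and r: "r > 0"
  shows "(\<lambda>p. c + Q (ball_chart r p)) ` ball_chart_domain r \<subseteq> ball c r"
    and "negligible (ball c r - (\<lambda>p. c + Q (ball_chart r p)) ` ball_chart_domain r)"
proof -
  show "(\<lambda>p. c + Q (ball_chart r p)) ` ball_chart_domain r \<subseteq> ball c r"
  proof (rule image_subsetI)
    fix p assume "p \<in> ball_chart_domain r"
    then have "norm (ball_chart r p) < r" using ball_chart_in_ball by simp
    then show "c + Q (ball_chart r p) \<in> ball c r" using orthogonal_transformation_norm[OF Q] by (simp add: dist_norm)
  qed
  define a where "a = Q (axis 2 1)"
  have "a \<noteq> 0" using orthogonal_transformation_norm[OF Q, of "axis 2 1"] by (auto simp: a_def)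
  moreover have "ball c r - (\<lambda>p. c + Q (ball_chart r p)) ` ball_chart_domain r \<subseteq> {y. a \<bullet> y = a \<bullet> c}"
  proof
    fix y assume y: "y \<in> ball c r - (\<lambda>p. c + Q (ball_chart r p)) ` ball_chart_domain r"
    obtain w where w: "Q w = y - c" using orthogonal_transformation_surj[OF Q] by (metis surjD)
    have "w \<in> ball 0 r"
      using y w orthogonal_transformation_norm[OF Q, of w] by (simp add: dist_norm norm_minus_commute)
    have "w$2 = 0"
    proof (rule ccontr)
      assume "w$2 \<noteq> 0"
      then obtain p where "p \<in> ball_chart_domain r" "w = ball_chart r p"
        using mem_ball_chart_image[OF r \<open>w \<in> ball 0 r\<close>] by blast
      moreover have "y = c + Q w" using w by simp
      ultimately show False using y by blast
    qed
    moreover have "a \<bullet> (y - c) = axis 2 1 \<bullet> w"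
      using Q by (simp add: a_def w[symmetric] orthogonal_transformation_def)
    ultimately show "y \<in> {y. a \<bullet> y = a \<bullet> c}" by (simp add: inner_diff_right cart_eq_inner_axis inner_commute)
  qed
  ultimately show "negligible (ball c r - (\<lambda>p. c + Q (ball_chart r p)) ` ball_chart_domain r)"
    by (intro negligible_subset[OF negligible_hyperplane]) auto
qed

lemma abs_det_rotated_ball_chart_deriv:
  assumes Q: "orthogonal_transformation Q" and p: "p \<in> ball_chart_domain r"
  shows "\<bar>det (matrix (\<lambda>h. Q (ball_chart_deriv r p h)))\<bar> = p$1 * (r\<^sup>2 - (p$2)\<^sup>2)"
proof -
  have height: "\<bar>p$2\<bar> \<le> r" "0 < p$1" using p by (auto simp: mem_ball_chart_domain)
  have "matrix (\<lambda>h. Q (ball_chart_deriv r p h)) = matrix Q ** matrix (ball_chart_deriv r p)"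
    using matrix_compose[OF linear_ball_chart_deriv orthogonal_transformation_linear[OF Q]] by (simp add: o_def)
  then have "\<bar>det (matrix (\<lambda>h. Q (ball_chart_deriv r p h)))\<bar> = \<bar>p$1 * (r\<^sup>2 - (p$2)\<^sup>2)\<bar>"
    using Q det_ball_chart_deriv[OF height(1)] by (simp add: det_mul abs_mult)
  moreover have "(p$2)\<^sup>2 \<le> r\<^sup>2" using height(1) by (simp add: abs_le_square_iff[symmetric])
  ultimately show ?thesis using height(2) by simp
qed

lemma inj_on_rotated_ball_chart:
  assumes "orthogonal_transformation Q"
  shows "inj_on (\<lambda>p. c + Q (ball_chart r p)) (ball_chart_domain r)"
proof (rule inj_onI)
  fix p p' assume p: "p \<in> ball_chart_domain r" "p' \<in> ball_chart_domain r"
    and "c + Q (ball_chart r p) = c + Q (ball_chart r p')"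
  then have "ball_chart r p = ball_chart r p'"
    using orthogonal_transformation_inj[OF assms] by (simp add: inj_eq)
  then show "p = p'" using inj_on_ball_chart[of r] p by (simp add: inj_on_def)
qed

lemma has_integral_green_rotated_ball_chart:
  fixes x c :: "real^3" and Q :: "real^3 \<Rightarrow> real^3"
  assumes k: "k > 0" and rL: "0 < r" "r < L"
    and Q: "orthogonal_transformation Q" and Qe: "Q (L *\<^sub>R axis 3 1) = x - c"
  shows "(helmholtz_green k x has_integral
      exp (\<i> * complex_of_real (k * L)) * complex_of_real ((sin (k * r) - k * r * cos (k * r)) / (k ^ 3 * L)))
      ((\<lambda>p. c + Q (ball_chart r p)) ` ball_chart_domain r)"
proof -
  define G where "G p = c + Q (ball_chart r p)" for p
  define S where "S = ball_chart_domain r"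
  have linQ: "linear Q" using Q by (simp add: orthogonal_transformation_linear)
  have height: "\<bar>p$2\<bar> < r" "\<bar>p$2\<bar> \<le> r" if "p \<in> S" for p
    using that by (auto simp: S_def mem_ball_chart_domain)
  have G_deriv: "(G has_derivative (\<lambda>h. Q (ball_chart_deriv r p h))) (at p within S)" if "p \<in> S" for p
    unfolding G_def using ball_chart_has_derivative[OF height(1)[OF that]] linQ
    by (auto intro!: derivative_eq_intros simp: linear_conv_bounded_linear bounded_linear.has_derivative)
  have "dist x (G p) = ball_chart_dist r L p" if "p \<in> S" for p
  proof -
    have "dist x (G p) = norm (Q (L *\<^sub>R axis 3 1 - ball_chart r p))"
      by (simp add: G_def Qe dist_norm linear_diff[OF linQ] algebra_simps)
    also have "\<dots> = ball_chart_dist r L p"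
      using orthogonal_transformation_norm[OF Q] norm_axis_diff_ball_chart[OF height(2)[OF that]] by simp
    finally show ?thesis .
  qed
  then have density: "\<bar>det (matrix (\<lambda>h. Q (ball_chart_deriv r p h)))\<bar> *\<^sub>R helmholtz_green k x (G p)
      = ball_chart_density k r L p" if "p \<in> S" for p
    using that abs_det_rotated_ball_chart_deriv[OF Q, of p r]
    by (simp add: S_def helmholtz_green_def ball_chart_density_def scaleR_conv_of_real)
  have S_lebesgue: "S \<in> sets lebesgue" by (simp add: S_def ball_chart_domain_def)
  have "ball_chart_density k r L absolutely_integrable_on S"
    using absolutely_integrable_continuous[OF continuous_on_ball_chart_density[OF rL]]
    by (rule set_integrable_subset) (use S_lebesgue in \<open>auto simp: S_def ball_chart_domain_def box_subset_cbox\<close>)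
  then have jacobian_integrable: "(\<lambda>p. \<bar>det (matrix (\<lambda>h. Q (ball_chart_deriv r p h)))\<bar> *\<^sub>R
      helmholtz_green k x (G p)) absolutely_integrable_on S"
    by (rule absolutely_integrable_spike[OF _ negligible_empty]) (simp add: density)
  have jacobian_integral: "((\<lambda>p. \<bar>det (matrix (\<lambda>h. Q (ball_chart_deriv r p h)))\<bar> *\<^sub>R helmholtz_green k x (G p))
      has_integral exp (\<i> * complex_of_real (k * L)) *
        complex_of_real ((sin (k * r) - k * r * cos (k * r)) / (k ^ 3 * L))) S"
    by (rule has_integral_spike[OF negligible_empty _ has_integral_ball_chart_density[OF k rL, folded S_def]])
      (simp add: density)
  from has_integral_change_of_variables_complex[OF S_lebesgue G_deriv
      inj_on_rotated_ball_chart[OF Q, of c r, folded G_def S_def] jacobian_integrable jacobian_integral]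
  show ?thesis unfolding G_def S_def .
qed

lemma volume_potential_ball:
  fixes x c :: "real^3" and k r :: real
  assumes k: "k > 0" and r: "r > 0" and x: "norm (x - c) > r"
  shows "volume_potential k (ball c r) x =
    exp (\<i> * complex_of_real (k * norm (x - c))) *
    complex_of_real ((sin (k * r) - k * r * cos (k * r)) / (k ^ 3 * norm (x - c)))"
proof -
  define L where "L = norm (x - c)"
  define e :: "real^3" where "e = L *\<^sub>R axis 3 1"
  have "norm e = norm (x - c)" using r x by (simp add: e_def L_def)
  from orthogonal_transformation_exists[OF this]
  obtain Q where Q: "orthogonal_transformation Q" and Qe: "Q e = x - c"
    by blast
  define B where "B = (\<lambda>p. c + Q (ball_chart r p)) ` ball_chart_domain r"
  have "(helmholtz_green k x has_integral
      exp (\<i> * complex_of_real (k * L)) * complex_of_real ((sin (k * r) - k * r * cos (k * r)) / (k ^ 3 * L))) B"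
    unfolding B_def using r x Q Qe by (intro has_integral_green_rotated_ball_chart[OF k]) (simp_all add: L_def e_def)
  moreover have "B \<subseteq> ball c r" and image_ae: "negligible (ball c r - B)"
    using rotated_ball_chart_image[OF Q r, of c] unfolding B_def by auto
  then have "{y \<in> B - ball c r. helmholtz_green k x y \<noteq> 0} = {}" by blast
  then have "negligible {y \<in> B - ball c r. helmholtz_green k x y \<noteq> 0}" by (simp only: negligible_empty)
  moreover have "negligible {y \<in> ball c r - B. helmholtz_green k x y \<noteq> 0}"
    by (rule negligible_subset[OF image_ae]) blast
  ultimately have "(helmholtz_green k x has_integral
      exp (\<i> * complex_of_real (k * L)) * complex_of_real ((sin (k * r) - k * r * cos (k * r)) / (k ^ 3 * L)))
      (ball c r)"
    using has_integral_spike_set_eq by blast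
  then show ?thesis unfolding volume_potential_def L_def by (rule integral_unique)
qed

lemma Ck_on_const: "Ck_on n S (\<lambda>x. a)"
proof (induction n arbitrary: a)
  case 0
  then show ?case by simp
next
  case (Suc n)
  show ?case by (simp only: Ck_on.simps, rule exI[of _ "\<lambda>x v. 0"]) (simp add: Suc)
qed

lemma Ck_on_affine: "Ck_on n S (\<lambda>x. a \<bullet> x + b)"
proof (cases n)
  case 0
  then show ?thesis by (simp add: continuous_intros)
next
  case (Suc m)
  have "((\<lambda>x. a \<bullet> x + b) has_derivative (\<lambda>v. a \<bullet> v)) (at x)" for x
    by (auto intro!: derivative_eq_intros)
  then show ?thesis unfolding Suc
    by (simp only: Ck_on.simps, intro exI[of _ "\<lambda>x v. a \<bullet> v"]) (simp add: Ck_on_const)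
qed

lemma has_derivative_sq_dist:
  "((\<lambda>x::'a::euclidean_space. (x - c) \<bullet> (x - c) - d) has_derivative (\<lambda>v. 2 * ((x - c) \<bullet> v))) (at x)"
  by (auto intro!: derivative_eq_intros simp: inner_commute)

lemma Ck_on_sq_dist: "Ck_on n S (\<lambda>x::'a::euclidean_space. (x - c) \<bullet> (x - c) - d)"
proof (cases n)
  case 0
  then show ?thesis by (simp add: continuous_intros)
next
  case (Suc m)
  have "(\<lambda>v. 2 * ((x - c) \<bullet> v)) = (\<lambda>v. (2 *\<^sub>R v) \<bullet> x + (- (2 * (v \<bullet> c))))" for x
    by (auto simp: fun_eq_iff inner_diff_left inner_diff_right inner_commute)
  then have "((\<lambda>x. (x - c) \<bullet> (x - c) - d) has_derivative (\<lambda>v. (2 *\<^sub>R v) \<bullet> x + (- (2 * (v \<bullet> c))))) (at x)" for x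
    using has_derivative_sq_dist[of c d x] by metis
  then show ?thesis unfolding Suc Ck_on.simps
    by (intro exI[of _ "\<lambda>x v. (2 *\<^sub>R v) \<bullet> x + (- (2 * (v \<bullet> c)))"] conjI ballI allI Ck_on_affine)
qed

lemma smooth_bounded_domain_ball:
  fixes c :: "'a::euclidean_space"
  assumes r: "r > 0"
  shows "smooth_bounded_domain (ball c r)"
  unfolding smooth_bounded_domain_def
proof (intro conjI ballI)
  show "open (ball c r)" "bounded (ball c r)" "connected (ball c r)" "ball c r \<noteq> {}"
    using r by simp_all
  fix p assume "p \<in> frontier (ball c r)"
  then have "p \<noteq> c" using r by (auto simp: frontier_ball)
  define \<phi> where "\<phi> x = (x - c) \<bullet> (x - c) - r\<^sup>2" for x
  show "\<exists>V \<phi>. open V \<and> p \<in> V \<and> smooth_on V \<phi> \<and>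
        (\<forall>x\<in>V. \<not> (\<phi> has_derivative (\<lambda>h. 0)) (at x)) \<and> ball c r \<inter> V = {x \<in> V. \<phi> x < 0}"
  proof (intro exI conjI)
    show "open (- {c})" "p \<in> - {c}" using \<open>p \<noteq> c\<close> by auto
    show "smooth_on (- {c}) \<phi>" unfolding smooth_on_def \<phi>_def by (simp add: Ck_on_sq_dist)
    show "\<forall>x\<in>- {c}. \<not> (\<phi> has_derivative (\<lambda>h. 0)) (at x)"
    proof (intro ballI notI)
      fix x assume x: "x \<in> - {c}" and "(\<phi> has_derivative (\<lambda>h. 0)) (at x)"
      then have "(\<lambda>v. 2 * ((x - c) \<bullet> v)) = (\<lambda>h. 0)"
        using has_derivative_unique has_derivative_sq_dist unfolding \<phi>_def by blast
      from fun_cong[OF this, of "x - c"] show False using x by simp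
    qed
    have "x \<in> ball c r \<longleftrightarrow> \<phi> x < 0" for x
    proof -
      have "x \<in> ball c r \<longleftrightarrow> norm (x - c) < r" by (simp add: dist_norm norm_minus_commute)
      also have "\<dots> \<longleftrightarrow> (norm (x - c))\<^sup>2 < r\<^sup>2"
        using r by (auto intro: power_strict_mono power2_less_imp_less)
      finally show ?thesis by (simp add: \<phi>_def power2_norm_eq_inner)
    qed
    then show "ball c r \<inter> - {c} = {x \<in> - {c}. \<phi> x < 0}" by blast
  qed
qed

lemma exists_pos_root_sin_eq_mult_cos: "\<exists>t::real. t > 0 \<and> sin t = t * cos t"
proof -
  have "continuous_on {pi .. 2 * pi} (\<lambda>t. sin t - t * cos t)" by (intro continuous_intros)
  then obtain t where "pi \<le> t" "sin t - t * cos t = 0"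
    using IVT2'[of "\<lambda>t. sin t - t * cos t" "2 * pi" 0 pi] by auto
  moreover have "t > 0" using \<open>pi \<le> t\<close> pi_gt_zero by linarith
  ultimately show ?thesis by auto
qed

lemma volume_potential_ball_eq_0:
  fixes x c :: "real^3"
  assumes "k > 0" "r > 0" "sin (k * r) = k * r * cos (k * r)" "norm x > norm c + r"
  shows "volume_potential k (ball c r) x = 0"
proof -
  have "norm (x - c) > r" using norm_triangle_ineq2[of x c] assms(4) by linarith
  then show ?thesis using volume_potential_ball[OF assms(1,2)] assms(3) by simp
qed

lemma inj_ball_translates:
  fixes v :: "'a::real_normed_vector"
  assumes "0 < r" "r \<le> norm v"
  shows "inj (\<lambda>n::nat. ball (real n *\<^sub>R v) r)"
proof (rule injI)
  fix i j :: nat assume "ball (real i *\<^sub>R v) r = ball (real j *\<^sub>R v) r"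
  moreover have "real i *\<^sub>R v \<in> ball (real i *\<^sub>R v) r" using assms(1) by simp
  ultimately have "real i *\<^sub>R v \<in> ball (real j *\<^sub>R v) r" by simp
  then have "\<bar>real j - real i\<bar> * norm v < norm v"
    using assms by (simp add: dist_norm scaleR_diff_left[symmetric])
  then show "i = j" by (cases "i = j") (auto simp: mult_less_cancel_right2)
qed

theorem theorem2:
  fixes k :: real
  assumes "k > 0"
  shows "\<exists>D :: nat \<Rightarrow> (real^3) set.
           inj D \<and> (\<forall>i. smooth_bounded_domain (D i)) \<and>
           (\<forall>i j. \<exists>R0>0. \<forall>R\<ge>R0. \<forall>x. norm x > R \<longrightarrow>
                volume_potential k (D i) x = volume_potential k (D j) x)"
proof -
  obtain t :: real where t: "t > 0" "sin t = t * cos t" using exists_pos_root_sin_eq_mult_cos by blast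
  define r where "r = t / k"
  have r: "r > 0" "k * r = t" using t assms by (simp_all add: r_def)
  define v :: "real^3" where "v = r *\<^sub>R axis 1 1"
  define D where "D n = ball (real n *\<^sub>R v) r" for n
  have vanish: "volume_potential k (D n) x = 0" if "norm x > norm (real n *\<^sub>R v) + r" for n x
    using volume_potential_ball_eq_0[OF assms r(1) _ that] t(2) r(2) by (simp add: D_def)
  have inj: "inj D" unfolding D_def by (rule inj_ball_translates) (simp_all add: v_def r)
  have smooth: "smooth_bounded_domain (D i)" for i unfolding D_def by (rule smooth_bounded_domain_ball[OF r(1)])
  have far_equal: "\<exists>R0>0. \<forall>R\<ge>R0. \<forall>x. norm x > R \<longrightarrow> volume_potential k (D i) x = volume_potential k (D j) x"
    for i j
  proof (intro exI[of _ "norm (real i *\<^sub>R v) + norm (real j *\<^sub>R v) + r"] conjI allI impI)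
    show "norm (real i *\<^sub>R v) + norm (real j *\<^sub>R v) + r > 0" using r(1) by (simp add: add_nonneg_pos)
    fix R :: real and x :: "real^3" assume "R \<ge> norm (real i *\<^sub>R v) + norm (real j *\<^sub>R v) + r" "norm x > R"
    then have "norm x > norm (real i *\<^sub>R v) + r" "norm x > norm (real j *\<^sub>R v) + r"
      using norm_ge_zero[of "real i *\<^sub>R v"] norm_ge_zero[of "real j *\<^sub>R v"] by linarith+
    then show "volume_potential k (D i) x = volume_potential k (D j) x" by (simp add: vanish)
  qed
  show ?thesis using inj smooth far_equal by (intro exI[of _ D] conjI allI)
qed

end
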